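(* Let $\lambda$ be a partition of $n$, and write $e_i=e_i(x_1,\dots,x_n)$. (1) If $\lambda=(u^a,(u-1)^c)$ (i.e. $a$ parts equal to $u$ followed by $c$ parts equal to $u-1$) and $g=a+c$, then $\mathcal{I}_\lambda$ is generated by $e_1,\dots,e_{g-1},x_1^{g},\dots,x_n^{g}$. (2) If $\lambda=(u^a,(u-1)^c,1)$ with $u\ge3$ and $g=a+c>1$, then $\mathcal{I}_\lambda$ is generated by $e_1,\dots,e_g$, $x_1^{g+1},\dots,x_n^{g+1}$, and $(x_ix_j)^g$ for all $1\le i<j\le n$. (3) If $\lambda=(u^a,(u-1)^c,1,1)$ with $u\ge4$ and $g=a+c+1>2$, then $\mathcal{I}_\lambda$ is generated by $e_1,\dots,e_g$, $x_1^{g+1},\dots,x_n^{g+1}$, $(x_i+x_j)(x_ix_j)^{g-1}$ for all $i\ne j$, and $(x_ix_jx_k)^{g-1}$ for all $1\le i<j<k\le n$.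
   Context: $k$ is a field of characteristic $0$ and $R=k[x_1,\dots,x_n]$. For a set $S$ of variables, $e_r(S)$ is the $r$-th elementary symmetric polynomial in the variables of $S$ ($e_0=1$, $e_r(S)=0$ if $r>|S|$), and for $1\le m\le n$, $e_r(m)=\{e_r(S): S\subseteq\{x_1,\dots,x_n\},\ |S|=m\}$. For a partition $\lambda$ of $n$ with conjugate $\lambda'_i=\#\{j:\lambda_j\ge i\}$ (and $\lambda'_i=0$ for $i>\lambda_1$), let $\delta_m(\lambda)=\lambda'_n+\cdots+\lambda'_{n-m+1}$ for $1\le m\le n$. The De Concini–Procesi ideal $\mathcal{I}_\lambda\subseteq R$ is the ideal generated by all elements of the sets $e_r(m)$ with $1\le m\le n$ and $m\ge r>m-\delta_m(\lambda)$. *)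

theory Defs
  imports "HOL-Library.Poly_Mapping"
begin

text \<open>Multivariate polynomials over k in variables x_i (i :: nat), represented as
  finitely supported maps from monomials (exponent vectors nat =>0 nat) to coefficients.\<close>
type_synonym 'k mpoly = "(nat \<Rightarrow>\<^sub>0 nat) \<Rightarrow>\<^sub>0 'k"

definition Var :: "nat \<Rightarrow> 'k::comm_ring_1 mpoly" where
  "Var i = Poly_Mapping.single (Poly_Mapping.single i 1) 1"

definition esym :: "nat \<Rightarrow> nat set \<Rightarrow> 'k::comm_ring_1 mpoly" where
  "esym r S = (\<Sum>T\<in>{T. T \<subseteq> S \<and> card T = r}. \<Prod>i\<in>T. Var i)"

definition ideal_gen :: "'a::comm_ring_1 set \<Rightarrow> 'a set" where
  "ideal_gen G = {p. \<exists>F c. finite F \<and> F \<subseteq> G \<and> p = (\<Sum>f\<in>F. c f * f)}"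

definition is_partition :: "nat \<Rightarrow> nat list \<Rightarrow> bool" where
  "is_partition n lam \<longleftrightarrow> sorted_wrt (\<ge>) lam \<and> (\<forall>x\<in>set lam. 0 < x) \<and> sum_list lam = n"

text \<open>conjugate partition: lam'_i = #{j. lam_j >= i} (indices i \<ge> 1)\<close>
definition conj_part :: "nat list \<Rightarrow> nat \<Rightarrow> nat" where
  "conj_part lam i = card {j. j < length lam \<and> i \<le> lam ! j}"

definition delta :: "nat \<Rightarrow> nat list \<Rightarrow> nat \<Rightarrow> nat" where
  "delta n lam m = (\<Sum>i\<in>{n - m + 1..n}. conj_part lam i)"

definition DP_gens :: "nat \<Rightarrow> nat list \<Rightarrow> 'k::comm_ring_1 mpoly set" where
  "DP_gens n lam = {esym r S | r S m. 1 \<le> m \<and> m \<le> n \<and> S \<subseteq> {1..n} \<and> card S = m \<and>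
        r \<le> m \<and> int m - int (delta n lam m) < int r}"

definition DP_ideal :: "nat \<Rightarrow> nat list \<Rightarrow> 'k::comm_ring_1 mpoly set" where
  "DP_ideal n lam = ideal_gen (DP_gens n lam)"

end

(*
  Modulo the ideal generated by all e_s(x_1, ..., x_n), s >= 1, an elementary symmetric
  polynomial in the variables outside a set J is congruent to +-h_r(x_J), the complete
  homogeneous polynomial in the variables of J: compare coefficients of t^r in
  prod_{j notin J} (1 + x_j t) = prod_j (1 + x_j t) * prod_{j in J} (1 + x_j t)^(-1).
  Hence I_lambda is generated by the e_s and the h_r(x_J) with
  r > lambda'_1 + ... + lambda'_|J| - |J|.

  For the three shapes of lambda this bound on r is linear in |J|, and then every monomial of
  h_r(x_J) is a multiple of a proposed generator, except that in case (3) the monomials with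
  exponents (g - 1, g) and (g, g - 1) on two of the variables only combine into multiples of
  (x_i + x_j)(x_i x_j)^(g-1).  Conversely, each proposed generator is extracted from h_r of one,
  two or three variables, and Newton's identities, which need characteristic 0, recover all e_s
  from e_1, ..., e_d and the powers x_j^(d+1).
*)

theory Submission
  imports Defs "HOL.Modules"
begin

text \<open>The ideals of a commutative ring are the submodules of the ring over itself, and
  \<open>ideal_gen\<close> is the span.\<close>

interpretation ideal: module "(*) :: 'a::comm_ring_1 \<Rightarrow> 'a \<Rightarrow> 'a"
  by unfold_locales (simp_all add: algebra_simps)

text \<open>As a simp rule, \<open>a * (b * x) = (a * b) * x\<close> loops against \<open>mult.assoc\<close>.\<close>

declare ideal.scale_scale [simp del]

lemma ideal_gen_eq_span: "ideal_gen G = ideal.span G"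
  unfolding ideal_gen_def ideal.span_explicit by blast

lemma ideal_gen_subspace: "ideal.subspace (ideal_gen G)"
  by (simp add: ideal_gen_eq_span)

lemma ideal_gen_base: "x \<in> G \<Longrightarrow> x \<in> ideal_gen G"
  by (simp add: ideal_gen_eq_span ideal.span_base)

lemma ideal_mult_right: "ideal.subspace K \<Longrightarrow> x \<in> K \<Longrightarrow> x * y \<in> K"
  by (metis ideal.subspace_scale mult.commute)

lemma ideal_power_mono:
  assumes "ideal.subspace K" "x ^ g \<in> K" "g \<le> t"
  shows "x ^ t \<in> K"
proof -
  have "x ^ t = x ^ g * x ^ (t - g)"
    using assms(3) by (simp flip: power_add)
  then show ?thesis
    using assms(1,2) by (simp add: ideal_mult_right)
qed

lemma ideal_colon:
  assumes K: "ideal.subspace K"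
  shows "ideal.subspace {p. a * p \<in> K}"
proof (rule ideal.subspaceI)
  show "0 \<in> {p. a * p \<in> K}"
    using ideal.subspace_0[OF K] by simp
  show "x + y \<in> {p. a * p \<in> K}" if "x \<in> {p. a * p \<in> K}" "y \<in> {p. a * p \<in> K}" for x y
    using ideal.subspace_add[OF K] that by (simp add: distrib_left)
  show "c * x \<in> {p. a * p \<in> K}" if "x \<in> {p. a * p \<in> K}" for c x
    using ideal.subspace_scale[OF K, of "a * x" c] that by (simp only: mem_Collect_eq mult.left_commute)
qed

lemma ideal_sum_diff_mem:
  assumes K: "ideal.subspace K" and "finite A" "B \<subseteq> A" and rest: "\<And>t. t \<in> A - B \<Longrightarrow> f t \<in> K"
  shows "sum f A - sum f B \<in> K"
proof -
  have "sum f A - sum f B = sum f (A - B)"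
    using assms(2,3) by (simp add: sum.subset_diff)
  moreover have "sum f (A - B) \<in> K"
    using K rest by (rule ideal.subspace_sum)
  ultimately show ?thesis
    by simp
qed

lemma ideal_sum_mem_iff_subset:
  assumes K: "ideal.subspace K" and "finite A" "B \<subseteq> A" and rest: "\<And>t. t \<in> A - B \<Longrightarrow> f t \<in> K"
  shows "sum f A \<in> K \<longleftrightarrow> sum f B \<in> K"
proof
  assume "sum f A \<in> K"
  then have "sum f A - (sum f A - sum f B) \<in> K"
    using ideal_sum_diff_mem[OF assms] by (rule ideal.subspace_diff[OF K])
  then show "sum f B \<in> K"
    by simp
next
  assume "sum f B \<in> K"
  then have "(sum f A - sum f B) + sum f B \<in> K"
    using ideal_sum_diff_mem[OF assms] by (intro ideal.subspace_add[OF K])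
  then show "sum f A \<in> K"
    by simp
qed

lemma ideal_of_nat_cancel:
  fixes p :: "'k::field_char_0 mpoly"
  assumes K: "ideal.subspace K" and p: "of_nat (Suc r) * p \<in> K"
  shows "p \<in> K"
proof -
  have "Poly_Mapping.single 0 (inverse (of_nat (Suc r))) * (of_nat (Suc r) :: 'k mpoly)
      = Poly_Mapping.single 0 (inverse (of_nat (Suc r)) * of_nat (Suc r))"
    by (simp only: single_of_nat[symmetric] mult_single add_0)
  also have "\<dots> = 1"
    by (simp del: of_nat_Suc)
  finally show ?thesis
    using ideal.subspace_scale[OF K p, of "Poly_Mapping.single 0 (inverse (of_nat (Suc r)))"]
    by (simp add: mult.assoc[symmetric])
qed

section \<open>Elementary symmetric polynomials\<close>

lemma esym_0: "finite S \<Longrightarrow> esym 0 S = 1"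
proof -
  assume "finite S"
  then have "T = {}" if "T \<subseteq> S" "card T = 0" for T
    using that by (meson card_0_eq finite_subset)
  then have "{T. T \<subseteq> S \<and> card T = 0} = {{}}"
    by auto
  then show ?thesis
    unfolding esym_def by simp
qed

lemma esym_eq_0: "finite S \<Longrightarrow> card S < r \<Longrightarrow> esym r S = 0"
proof -
  assume "finite S" "card S < r"
  then have "\<not> (T \<subseteq> S \<and> card T = r)" for T
    using card_mono[of S T] by auto
  then have empty: "{T. T \<subseteq> S \<and> card T = r} = {}"
    by blast
  show ?thesis
    unfolding esym_def empty by simp
qed

lemma subsets_card_Suc_insert:
  assumes "finite S" "j \<notin> S"
  shows "{T. T \<subseteq> insert j S \<and> card T = Suc r}
    = {T. T \<subseteq> S \<and> card T = Suc r} \<union> insert j ` {T. T \<subseteq> S \<and> card T = r}"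
proof (intro equalityI subsetI)
  fix T assume T: "T \<in> {T. T \<subseteq> insert j S \<and> card T = Suc r}"
  show "T \<in> {T. T \<subseteq> S \<and> card T = Suc r} \<union> insert j ` {T. T \<subseteq> S \<and> card T = r}"
  proof (cases "j \<in> T")
    case True
    then have "T = insert j (T - {j})" "card (T - {j}) = r"
      using T by auto
    moreover have "T - {j} \<subseteq> S"
      using T by auto
    ultimately show ?thesis
      by blast
  qed (use T in auto)
next
  fix T assume "T \<in> {T. T \<subseteq> S \<and> card T = Suc r} \<union> insert j ` {T. T \<subseteq> S \<and> card T = r}"
  then show "T \<in> {T. T \<subseteq> insert j S \<and> card T = Suc r}"
  proof
    assume "T \<in> insert j ` {T. T \<subseteq> S \<and> card T = r}"
    then obtain U where U: "U \<subseteq> S" "card U = r" "T = insert j U"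
      by blast
    moreover have "finite U" "j \<notin> U"
      using U assms finite_subset by auto
    ultimately show ?thesis
      by auto
  qed auto
qed

lemma esym_Suc_insert:
  assumes "finite S" "j \<notin> S"
  shows "esym (Suc r) (insert j S) = esym (Suc r) S + Var j * esym r S"
proof -
  let ?A = "{T. T \<subseteq> S \<and> card T = Suc r}" and ?B = "{T. T \<subseteq> S \<and> card T = r}"
  have inj: "inj_on (insert j) ?B"
  proof (rule inj_onI)
    fix U V assume "U \<in> ?B" "V \<in> ?B" "insert j U = insert j V"
    moreover have "j \<notin> U" "j \<notin> V"
      using calculation assms(2) by auto
    ultimately show "U = V"
      by (metis Diff_insert_absorb)
  qed
  have "finite ?A" "finite (insert j ` ?B)" "?A \<inter> insert j ` ?B = {}"
    using assms by auto
  then have "esym (Suc r) (insert j S) = (\<Sum>T\<in>?A. \<Prod>i\<in>T. Var i) + (\<Sum>T\<in>insert j ` ?B. \<Prod>i\<in>T. Var i)"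
    unfolding esym_def subsets_card_Suc_insert[OF assms] by (rule sum.union_disjoint)
  also have "(\<Sum>T\<in>insert j ` ?B. \<Prod>i\<in>T. Var i) = (\<Sum>T\<in>?B. \<Prod>i\<in>insert j T. Var i)"
    by (rule sum.reindex[OF inj, unfolded comp_def])
  also have "\<dots> = (\<Sum>T\<in>?B. Var j * (\<Prod>i\<in>T. Var i))"
  proof (rule sum.cong)
    fix T assume "T \<in> ?B"
    then have "finite T" "j \<notin> T"
      using assms finite_subset by auto
    then show "(\<Prod>i\<in>insert j T. Var i) = Var j * (\<Prod>i\<in>T. Var i)"
      by simp
  qed simp
  finally show ?thesis
    unfolding esym_def by (simp add: sum_distrib_left)
qed

lemma esym_Diff_singleton:
  assumes "finite S" "j \<in> S"
  shows "esym r (S - {j}) = (\<Sum>t\<le>r. (- Var j) ^ t * esym (r - t) S :: 'a::comm_ring_1 mpoly)"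
proof (induction r)
  case 0
  show ?case
    using assms by (simp add: esym_0)
next
  case (Suc r)
  have "esym (Suc r) S = esym (Suc r) (S - {j}) + Var j * (esym r (S - {j}) :: 'a mpoly)"
    using esym_Suc_insert[of "S - {j}" j r] assms by (simp add: insert_absorb)
  then have "esym (Suc r) (S - {j}) = esym (Suc r) S - Var j * (esym r (S - {j}) :: 'a mpoly)"
    unfolding eq_diff_eq by (rule sym)
  also have "\<dots> = esym (Suc r) S + (\<Sum>t\<le>r. (- Var j) ^ Suc t * esym (r - t) S)"
    unfolding Suc.IH by (simp add: sum_distrib_left sum_negf mult.assoc)
  also have "\<dots> = (\<Sum>t\<le>Suc r. (- Var j) ^ t * esym (Suc r - t) S)"
    by (subst sum.atMost_Suc_shift) simp
  finally show ?case .
qed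

lemma sum_Var_mult_esym_Diff:
  assumes "finite S"
  shows "(\<Sum>j\<in>S. Var j * esym r (S - {j})) = of_nat (Suc r) * (esym (Suc r) S :: 'a::comm_ring_1 mpoly)"
  using assms
proof (induction S arbitrary: r rule: finite_induct)
  case empty
  then show ?case
    by (simp add: esym_eq_0)
next
  case (insert a S)
  have "insert a S - {j} = insert a (S - {j})" if "j \<in> S" for j
    using that insert.hyps by auto
  then have "(\<Sum>j\<in>insert a S. Var j * esym r (insert a S - {j}))
      = Var a * esym r S + (\<Sum>j\<in>S. Var j * esym r (insert a (S - {j})) :: 'a mpoly)"
    using insert.hyps by simp
  also have "\<dots> = of_nat (Suc r) * esym (Suc r) (insert a S)"
  proof (cases r)
    case 0
    then show ?thesis
      using insert.hyps insert.IH[of 0] by (simp add: esym_0 esym_Suc_insert add.commute)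
  next
    case (Suc r')
    have "(\<Sum>j\<in>S. Var j * esym r (insert a (S - {j})))
        = (\<Sum>j\<in>S. Var j * esym r (S - {j})) + Var a * (\<Sum>j\<in>S. Var j * esym r' (S - {j}) :: 'a mpoly)"
      unfolding Suc using insert.hyps
      by (simp add: esym_Suc_insert distrib_left mult.left_commute sum.distrib sum_distrib_left)
    then show ?thesis
      using insert Suc by (simp add: esym_Suc_insert algebra_simps)
  qed
  finally show ?case .
qed

lemma esym_mem_ideal_of_low_degrees:
  fixes K :: "'k::field_char_0 mpoly set"
  assumes K: "ideal.subspace K" and F: "finite F"
    and low: "\<And>s. 1 \<le> s \<Longrightarrow> s \<le> d \<Longrightarrow> esym s F \<in> K"
    and pow: "\<And>j. j \<in> F \<Longrightarrow> Var j ^ Suc d \<in> K"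
  shows "1 \<le> s \<Longrightarrow> esym s F \<in> K"
proof (induction s rule: less_induct)
  case (less s)
  show ?case
  proof (cases "s \<le> d")
    case True
    then show ?thesis
      using low less.prems by auto
  next
    case False
    then obtain r where s: "s = Suc r" and r: "d \<le> r"
      by (cases s) auto
    have "of_nat (Suc r) * esym (Suc r) F = (\<Sum>j\<in>F. Var j * esym r (F - {j}) :: 'k mpoly)"
      by (rule sum_Var_mult_esym_Diff[OF F, symmetric])
    also have "\<dots> = (\<Sum>j\<in>F. \<Sum>t\<le>r. Var j * ((- Var j) ^ t * esym (r - t) F))"
      by (rule sum.cong) (simp_all add: esym_Diff_singleton[OF F] sum_distrib_left)
    also have "\<dots> \<in> K"
    proof (intro ideal.subspace_sum[OF K])
      fix j t assume j: "j \<in> F" and t: "t \<in> {..r}"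
      show "Var j * ((- Var j) ^ t * esym (r - t) F) \<in> K"
      proof (cases "t = r")
        case True
        have eq: "Var j * ((- Var j) ^ t * esym (r - t) F) = (-1) ^ r * (Var j ^ Suc r :: 'k mpoly)"
          using True F by (simp add: esym_0 power_minus[of "Var j"] algebra_simps)
        have "Var j ^ Suc r \<in> K"
          using ideal_power_mono[OF K pow[OF j], of "Suc r"] r by simp
        then show ?thesis
          unfolding eq by (rule ideal.subspace_scale[OF K])
      next
        case False
        then have "esym (r - t) F \<in> K"
          using t s by (intro less.IH) auto
        then show ?thesis
          by (intro ideal.subspace_scale[OF K])
      qed
    qed
    finally show ?thesis
      using s ideal_of_nat_cancel[OF K] by blast
  qed
qed

section \<open>Complete homogeneous symmetric polynomials\<close>

fun hsym :: "nat \<Rightarrow> nat list \<Rightarrow> 'a::comm_ring_1 mpoly" where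
  "hsym r [] = (if r = 0 then 1 else 0)"
| "hsym r (j # js) = (\<Sum>t\<le>r. Var j ^ t * hsym (r - t) js)"

lemma hsym_0 [simp]: "hsym 0 js = 1"
  by (induction js) auto

lemma hsym_single: "hsym r [j] = (Var j ^ r :: 'a::comm_ring_1 mpoly)"
proof -
  have "hsym r [j] = (\<Sum>t\<le>r. Var j ^ t * (if r - t = 0 then 1 else 0) :: 'a mpoly)"
    by simp
  also have "\<dots> = (\<Sum>t\<in>{r}. Var j ^ t * (if r - t = 0 then 1 else 0))"
    by (rule sum.mono_neutral_right) auto
  finally show ?thesis
    by simp
qed

lemma hsym_pair: "hsym r [i, j] = (\<Sum>t\<le>r. Var i ^ t * Var j ^ (r - t))"
  unfolding hsym.simps(2)[of r i "[j]"] hsym_single ..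

text \<open>Comparing coefficients in
  \<open>\<Prod>j\<in>F - set js. (1 + x\<^sub>j t) = \<Prod>j\<in>F. (1 + x\<^sub>j t) * \<Prod>j\<in>set js. (1 + x\<^sub>j t)\<^sup>-\<^sup>1\<close>,
  one variable of js at a time.\<close>

lemma hsym_Suc_add_Var_mult_hsym_Cons:
  "Var x ^ c * (hsym (Suc d) (y # js) + Var x * hsym d (y # js))
    = Var x ^ c * Var y ^ Suc d
      + (\<Sum>t\<le>d. Var y ^ t * (Var x ^ c * (hsym (Suc (d - t)) js + Var x * hsym (d - t) js)))"
proof -
  have "hsym (Suc d) (y # js) = (\<Sum>t\<le>d. Var y ^ t * hsym (Suc d - t) js) + (Var y ^ Suc d :: 'a::comm_ring_1 mpoly)"
    by simp
  also have "(\<Sum>t\<le>d. Var y ^ t * hsym (Suc d - t) js) = (\<Sum>t\<le>d. Var y ^ t * (hsym (Suc (d - t)) js :: 'a mpoly))"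
    by (rule sum.cong) (auto simp: Suc_diff_le)
  finally show ?thesis
    by (simp add: sum_distrib_left sum.distrib algebra_simps)
qed

lemma esym_Diff_set_hsym_mem:
  assumes K: "ideal.subspace K" and F: "finite F" and E: "\<And>s. 1 \<le> s \<Longrightarrow> esym s F \<in> K"
  shows "distinct js \<Longrightarrow> set js \<subseteq> F \<Longrightarrow>
    esym r (F - set js) - (-1) ^ r * hsym r js \<in> (K :: 'a::comm_ring_1 mpoly set)"
proof (induction js arbitrary: r)
  case Nil
  show ?case
  proof (cases r)
    case 0
    then show ?thesis
      using F ideal.subspace_0[OF K] by (simp add: esym_0)
  next
    case (Suc r')
    then show ?thesis
      using E[of r] by simp
  qed
next
  case (Cons j js)
  let ?S = "F - set js"
  have j: "j \<in> ?S" and S: "finite ?S" and F_diff: "F - set (j # js) = ?S - {j}"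
    using Cons.prems F by auto
  have "(-1) ^ r * hsym r (j # js)
      = (\<Sum>t\<le>r. (- Var j) ^ t * ((-1) ^ (r - t) * hsym (r - t) js) :: 'a mpoly)"
    unfolding hsym.simps sum_distrib_left
  proof (rule sum.cong)
    fix t assume "t \<in> {..r}"
    then have "(-1::'a mpoly) ^ r = (-1) ^ t * (-1) ^ (r - t)"
      by (metis le_add_diff_inverse atMost_iff power_add)
    then show "(-1) ^ r * (Var j ^ t * hsym (r - t) js)
        = (- Var j) ^ t * ((-1) ^ (r - t) * hsym (r - t) js :: 'a mpoly)"
      by (simp add: power_minus[of "Var j"] algebra_simps)
  qed simp
  then have "esym r (F - set (j # js)) - (-1) ^ r * hsym r (j # js)
      = (\<Sum>t\<le>r. (- Var j) ^ t * (esym (r - t) ?S - (-1) ^ (r - t) * hsym (r - t) js) :: 'a mpoly)"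
    unfolding F_diff esym_Diff_singleton[OF S j] by (simp add: sum_subtractf right_diff_distrib)
  also have "\<dots> \<in> K"
    using Cons by (intro ideal.subspace_sum[OF K] ideal.subspace_scale[OF K]) auto
  finally show ?case .
qed

section \<open>The De Concini--Procesi ideal in terms of complete homogeneous polynomials\<close>

lemma conj_part_filter: "conj_part lam i = length (filter (\<lambda>x. i \<le> x) lam)"
  by (simp add: conj_part_def length_filter_conv_card)

lemma conj_part_1: "is_partition n lam \<Longrightarrow> conj_part lam 1 = length lam"
  unfolding conj_part_filter is_partition_def by (simp add: Suc_le_eq filter_True)

lemma sum_conj_part:
  "\<forall>x\<in>set lam. x \<le> N \<Longrightarrow> (\<Sum>i\<in>{1..N}. conj_part lam i) = sum_list lam"
proof (induction lam)
  case Nil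
  then show ?case
    by (simp add: conj_part_filter)
next
  case (Cons x xs)
  have "{1..N} \<inter> {i. i \<le> x} = {1..x}"
    using Cons.prems by auto
  then have "(\<Sum>i\<in>{1..N}. if i \<le> x then 1 else 0 :: nat) = x"
    by (simp add: sum.If_cases)
  moreover have "(\<Sum>i\<in>{1..N}. conj_part (x # xs) i)
      = (\<Sum>i\<in>{1..N}. if i \<le> x then 1 else 0) + (\<Sum>i\<in>{1..N}. conj_part xs i)"
    unfolding sum.distrib[symmetric] by (rule sum.cong) (simp_all add: conj_part_filter)
  ultimately show ?case
    using Cons by simp
qed

lemma delta_add_sum_conj_part:
  assumes part: "is_partition n lam" and k: "k \<le> n"
  shows "delta n lam (n - k) + (\<Sum>i\<in>{1..k}. conj_part lam i) = n"
proof -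
  have "\<forall>x\<in>set lam. x \<le> n"
    using part unfolding is_partition_def using member_le_sum_list by fastforce
  then have "(\<Sum>i\<in>{1..n}. conj_part lam i) = n"
    using part sum_conj_part unfolding is_partition_def by auto
  moreover have "{1..n} = {1..k} \<union> {k + 1..n}"
    using k by auto
  moreover have "(\<Sum>i\<in>{1..k} \<union> {k + 1..n}. conj_part lam i)
      = (\<Sum>i\<in>{1..k}. conj_part lam i) + (\<Sum>i\<in>{k + 1..n}. conj_part lam i)"
    by (rule sum.union_disjoint) auto
  moreover have "n - (n - k) + 1 = k + 1"
    using k by simp
  ultimately show ?thesis
    unfolding delta_def by simp
qed

text \<open>With \<open>k = n - card S\<close> variables outside \<open>S\<close>, the condition \<open>m - \<delta>\<^sub>m(\<lambda>) < r\<close> on a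
  generator \<open>esym r S\<close> reads \<open>\<lambda>'\<^sub>1 + \<dots> + \<lambda>'\<^sub>k < r + k\<close>.\<close>

lemma esym_mem_DP_ideal:
  assumes part: "is_partition n lam" and S: "S \<subseteq> {1..n}"
    and cond: "(\<Sum>i\<in>{1..n - card S}. conj_part lam i) < r + (n - card S)"
  shows "esym r S \<in> (DP_ideal n lam :: 'k::comm_ring_1 mpoly set)"
proof (cases "card S < r")
  case True
  then show ?thesis
    using finite_subset[OF S] by (simp add: esym_eq_0 DP_ideal_def ideal_gen_eq_span ideal.span_zero)
next
  case False
  have m: "card S \<le> n"
    using card_mono[OF _ S] by simp
  have d: "delta n lam (card S) + (\<Sum>i\<in>{1..n - card S}. conj_part lam i) = n"
    using delta_add_sum_conj_part[OF part, of "n - card S"] m by simp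
  have "card S \<noteq> 0"
  proof
    assume "card S = 0"
    moreover have "delta n lam 0 = 0"
      by (simp add: delta_def)
    ultimately show False
      using d cond False by simp
  qed
  moreover have "int (card S) - int (delta n lam (card S)) < int r"
    using d cond m by linarith
  ultimately have "esym r S \<in> (DP_gens n lam :: 'k mpoly set)"
    unfolding DP_gens_def mem_Collect_eq using S m False
    by (intro exI[of _ r] exI[of _ S] exI[of _ "card S"]) auto
  then show ?thesis
    unfolding DP_ideal_def ideal_gen_eq_span by (rule ideal.span_base)
qed

lemma DP_gensE:
  assumes part: "is_partition n lam" and p: "p \<in> (DP_gens n lam :: 'k::comm_ring_1 mpoly set)"
  obtains r S where "p = esym r S" "S \<subseteq> {1..n}" "r \<le> card S"
    "(\<Sum>i\<in>{1..n - card S}. conj_part lam i) < r + (n - card S)"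
proof -
  obtain r S where rS: "p = esym r S" "card S \<le> n" "S \<subseteq> {1..n}" "r \<le> card S"
    "int (card S) - int (delta n lam (card S)) < int r"
    using p unfolding DP_gens_def by blast
  moreover have "delta n lam (card S) + (\<Sum>i\<in>{1..n - card S}. conj_part lam i) = n"
    using delta_add_sum_conj_part[OF part, of "n - card S"] rS(2) by simp
  moreover have "int (n - card S) = int n - int (card S)"
    using rS(2) by simp
  ultimately have "(\<Sum>i\<in>{1..n - card S}. conj_part lam i) < r + (n - card S)"
    by linarith
  then show ?thesis
    using that rS by blast
qed

definition DP_hsyms :: "nat \<Rightarrow> nat list \<Rightarrow> 'k::comm_ring_1 mpoly set" where
  "DP_hsyms n lam = {hsym r js | r js. distinct js \<and> set js \<subseteq> {1..n} \<and> r + length js \<le> n \<and>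
     (\<Sum>i\<in>{1..length js}. conj_part lam i) < r + length js}"

lemma esym_all_mem_DP_ideal:
  "is_partition n lam \<Longrightarrow> 1 \<le> s \<Longrightarrow> esym s {1..n} \<in> (DP_ideal n lam :: 'k::comm_ring_1 mpoly set)"
  by (rule esym_mem_DP_ideal) auto

lemma hsym_mem_DP_ideal:
  fixes js :: "nat list"
  assumes part: "is_partition n lam" and js: "distinct js" "set js \<subseteq> {1..n}"
    and cond: "(\<Sum>i\<in>{1..length js}. conj_part lam i) < r + length js"
  shows "hsym r js \<in> (DP_ideal n lam :: 'k::comm_ring_1 mpoly set)"
proof -
  let ?I = "DP_ideal n lam :: 'k mpoly set"
  have I: "ideal.subspace ?I"
    unfolding DP_ideal_def ideal_gen_eq_span by simp
  have "card ({1..n} - set js) = n - length js" "length js \<le> n"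
    using js card_mono[OF _ js(2)] by (simp_all add: card_Diff_subset distinct_card)
  then have "esym r ({1..n} - set js) \<in> ?I"
    using cond by (intro esym_mem_DP_ideal[OF part]) auto
  moreover have "esym r ({1..n} - set js) - (-1) ^ r * hsym r js \<in> ?I"
    using js by (intro esym_Diff_set_hsym_mem[OF I _ esym_all_mem_DP_ideal[OF part]]) auto
  ultimately have "esym r ({1..n} - set js) - (esym r ({1..n} - set js) - (-1) ^ r * hsym r js) \<in> ?I"
    by (rule ideal.subspace_diff[OF I])
  then have "(-1) ^ r * hsym r js \<in> ?I"
    by simp
  then have "(-1) ^ r * ((-1) ^ r * hsym r js) \<in> ?I"
    by (rule ideal.subspace_scale[OF I])
  moreover have "(-1) ^ r * ((-1) ^ r * hsym r js) = (hsym r js :: 'k mpoly)"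
    by (simp flip: mult.assoc power_mult_distrib)
  ultimately show ?thesis
    by (simp only:)
qed

lemma Var_power_mem_DP_ideal:
  assumes part: "is_partition n lam" and i: "i \<in> {1..n}" and r: "length lam < r + 1"
  shows "Var i ^ r \<in> (DP_ideal n lam :: 'k::comm_ring_1 mpoly set)"
proof -
  have "hsym r [i] \<in> (DP_ideal n lam :: 'k mpoly set)"
    using i r conj_part_1[OF part] by (intro hsym_mem_DP_ideal[OF part]) auto
  then show ?thesis
    by (simp only: hsym_single)
qed

theorem DP_ideal_eq_span:
  assumes part: "is_partition n lam"
  shows "(DP_ideal n lam :: 'k::comm_ring_1 mpoly set)
    = ideal.span ({esym s {1..n} | s. 1 \<le> s} \<union> DP_hsyms n lam)"
proof
  let ?J = "ideal.span ({esym s {1..n} | s. 1 \<le> s} \<union> DP_hsyms n lam) :: 'k mpoly set"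
  show "DP_ideal n lam \<subseteq> ?J"
    unfolding DP_ideal_def ideal_gen_eq_span
  proof (rule ideal.span_minimal[OF subsetI ideal.subspace_span])
    fix p assume "p \<in> (DP_gens n lam :: 'k mpoly set)"
    then obtain r S where rS: "p = esym r S" "S \<subseteq> {1..n}" "r \<le> card S"
      "(\<Sum>i\<in>{1..n - card S}. conj_part lam i) < r + (n - card S)"
      by (rule DP_gensE[OF part])
    define js where "js = sorted_list_of_set ({1..n} - S)"
    have js: "distinct js" "set js = {1..n} - S" "length js = n - card S"
      using rS(2) by (simp_all add: js_def card_Diff_subset finite_subset)
    have "card S \<le> n"
      using card_mono[OF _ rS(2)] by simp
    then have "hsym r js \<in> DP_hsyms n lam"
      unfolding DP_hsyms_def mem_Collect_eq using js rS
      by (intro exI[of _ r] exI[of _ js]) auto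
    then have "hsym r js \<in> ?J"
      by (intro ideal.span_base UnI2)
    moreover have "esym r ({1..n} - set js) - (-1) ^ r * hsym r js \<in> ?J"
      using js by (intro esym_Diff_set_hsym_mem) (auto intro: ideal.span_base)
    ultimately have "esym r ({1..n} - set js) - (-1) ^ r * hsym r js + (-1) ^ r * hsym r js \<in> ?J"
      by (intro ideal.span_add ideal.span_scale)
    moreover have "{1..n} - set js = S"
      using js(2) rS(2) by auto
    ultimately show "p \<in> ?J"
      using rS(1) by simp
  qed
  show "?J \<subseteq> DP_ideal n lam"
  proof (rule ideal.span_minimal)
    show "ideal.subspace (DP_ideal n lam :: 'k mpoly set)"
      unfolding DP_ideal_def ideal_gen_eq_span by simp
    show "{esym s {1..n} | s. 1 \<le> s} \<union> DP_hsyms n lam \<subseteq> (DP_ideal n lam :: 'k mpoly set)"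
      unfolding DP_hsyms_def using esym_all_mem_DP_ideal[OF part] hsym_mem_DP_ideal[OF part] by blast
  qed
qed

lemma DP_ideal_eq_ideal_genI:
  fixes G :: "'k::field_char_0 mpoly set"
  assumes part: "is_partition n lam" and G: "G \<subseteq> DP_ideal n lam"
    and low: "\<And>s. 1 \<le> s \<Longrightarrow> s \<le> d \<Longrightarrow> esym s {1..n} \<in> G"
    and pow: "\<And>j. j \<in> {1..n} \<Longrightarrow> Var j ^ Suc d \<in> G"
    and H: "\<And>r js. distinct js \<Longrightarrow> set js \<subseteq> {1..n} \<Longrightarrow> r + length js \<le> n \<Longrightarrow>
      (\<Sum>i\<in>{1..length js}. conj_part lam i) < r + length js \<Longrightarrow> hsym r js \<in> ideal_gen G"
  shows "DP_ideal n lam = ideal_gen G"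
proof
  have "esym s {1..n} \<in> ideal_gen G" if "1 \<le> s" for s
    using ideal_gen_subspace finite_atLeastAtMost low[THEN ideal_gen_base] pow[THEN ideal_gen_base] that
    by (rule esym_mem_ideal_of_low_degrees)
  then show "DP_ideal n lam \<subseteq> ideal_gen G"
    unfolding DP_ideal_eq_span[OF part] ideal_gen_eq_span
    using H by (intro ideal.span_minimal) (auto simp: DP_hsyms_def ideal_gen_eq_span)
  show "ideal_gen G \<subseteq> DP_ideal n lam"
    unfolding ideal_gen_eq_span using G
    by (rule ideal.span_minimal) (simp add: DP_ideal_def ideal_gen_eq_span)
qed

section \<open>Partitions \<open>(u\<^sup>a, (u - 1)\<^sup>c, 1\<^sup>e)\<close>\<close>

lemma conj_part_shape:
  "conj_part (replicate a u @ replicate c (u - 1) @ replicate e 1) i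
    = (if i \<le> u then a else 0) + (if i \<le> u - 1 then c else 0) + (if i \<le> 1 then e else 0)"
  by (simp add: conj_part_filter filter_replicate)

lemma sum_conj_part_shape:
  assumes "k \<le> u - 1"
  shows "(\<Sum>i\<in>{1..k}. conj_part (replicate a u @ replicate c (u - 1) @ replicate e 1) i)
     = k * (a + c) + (if k = 0 then 0 else e)"
proof -
  have "(\<Sum>i\<in>{1..k}. conj_part (replicate a u @ replicate c (u - 1) @ replicate e 1) i)
      = (\<Sum>i\<in>{1..k}. (a + c) + (if i \<le> 1 then e else 0))"
    by (rule sum.cong[OF refl], subst conj_part_shape) (use assms in auto)
  also have "\<dots> = k * (a + c) + (\<Sum>i\<in>{1..k}. if i \<le> 1 then e else 0)"
    by (simp add: sum.distrib)
  also have "(\<Sum>i\<in>{1..k}. if i \<le> 1 then e else 0) = (if k = 0 then 0 else e)"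
  proof (cases k)
    case (Suc k')
    then have "{1..k} = insert 1 {2..k}"
      by auto
    then show ?thesis
      using Suc by simp
  qed simp
  finally show ?thesis .
qed

lemma sum_conj_part_shape_lessD:
  assumes part: "is_partition n (replicate a u @ replicate c (u - 1) @ replicate e 1)"
    and rk: "r + k \<le> n"
    and cond: "(\<Sum>i\<in>{1..k}. conj_part (replicate a u @ replicate c (u - 1) @ replicate e 1) i) < r + k"
  shows "k \<le> u - 1" "k * (a + c) + (if k = 0 then 0 else e) < r + k"
proof -
  show k: "k \<le> u - 1"
  proof (rule ccontr)
    assume "\<not> k \<le> u - 1"
    then have "\<forall>x\<in>set (replicate a u @ replicate c (u - 1) @ replicate e 1). x \<le> k"
      by auto
    then have "(\<Sum>i\<in>{1..k}. conj_part (replicate a u @ replicate c (u - 1) @ replicate e 1) i) = n"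
      using part sum_conj_part unfolding is_partition_def by metis
    then show False
      using cond rk by linarith
  qed
  show "k * (a + c) + (if k = 0 then 0 else e) < r + k"
    using cond sum_conj_part_shape[OF k] by simp
qed

lemma hsym_mem_DP_ideal_shape:
  assumes part: "is_partition n (replicate a u @ replicate c (u - 1) @ replicate e 1)"
    and js: "distinct js" "set js \<subseteq> {1..n}" "js \<noteq> []" "length js \<le> u - 1"
    and r: "length js * (a + c) + e < r + length js"
  shows "hsym r js \<in> (DP_ideal n (replicate a u @ replicate c (u - 1) @ replicate e 1) :: 'k::comm_ring_1 mpoly set)"
proof (rule hsym_mem_DP_ideal[OF part js(1,2)])
  show "(\<Sum>i\<in>{1..length js}. conj_part (replicate a u @ replicate c (u - 1) @ replicate e 1) i)
      < r + length js"
    by (subst sum_conj_part_shape[OF js(4)]) (use js(3) r in simp)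
qed

lemma hsym_mem_of_powers:
  fixes K :: "'a::comm_ring_1 mpoly set"
  assumes K: "ideal.subspace K" and pow: "\<And>j. j \<in> V \<Longrightarrow> Var j ^ g \<in> K"
  shows "set js \<subseteq> V \<Longrightarrow> length js * (g - 1) < r \<Longrightarrow> hsym r js \<in> K"
proof (induction js arbitrary: r)
  case Nil
  then show ?case
    using ideal.subspace_0[OF K] by simp
next
  case (Cons j js)
  have len: "length (j # js) * (g - 1) = length js * (g - 1) + (g - 1)"
    by simp
  show ?case
    unfolding hsym.simps
  proof (rule ideal.subspace_sum[OF K])
    fix t assume t: "t \<in> {..r}"
    show "Var j ^ t * hsym (r - t) js \<in> K"
    proof (cases "g \<le> t")
      case True
      then show ?thesis
        using ideal_power_mono[OF K pow] Cons.prems ideal_mult_right[OF K] by auto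
    next
      case False
      then have "length js * (g - 1) < r - t"
        using Cons.prems(2) t len by linarith
      then show ?thesis
        using Cons by (auto intro: ideal.subspace_scale[OF K])
    qed
  qed
qed

lemma Var_pow_mult_Var_pow_mem_of_pairs:
  fixes K :: "'a::comm_ring_1 mpoly set"
  assumes K: "ideal.subspace K" and g: "1 \<le> g"
    and pow: "\<And>j. j \<in> V \<Longrightarrow> Var j ^ Suc g \<in> K"
    and pair: "\<And>i j. i \<in> V \<Longrightarrow> j \<in> V \<Longrightarrow> i < j \<Longrightarrow> (Var i * Var j) ^ g \<in> K"
    and i: "i \<in> V" and j: "j \<in> V"
  shows "Var i ^ g * Var j ^ g \<in> K"
proof (cases i j rule: linorder_cases)
  case less
  then show ?thesis
    using pair[OF i j] by (simp add: power_mult_distrib)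
next
  case equal
  then show ?thesis
    using ideal_power_mono[OF K pow[OF i], of "g + g"] g by (simp add: power_add)
next
  case greater
  then show ?thesis
    using pair[OF j i] by (simp add: power_mult_distrib mult.commute)
qed

lemma hsym_mem_of_powers_and_squares:
  fixes K :: "'a::comm_ring_1 mpoly set"
  assumes K: "ideal.subspace K" and g: "1 \<le> g"
    and pow: "\<And>j. j \<in> V \<Longrightarrow> Var j ^ Suc g \<in> K"
    and sq: "\<And>i j. i \<in> V \<Longrightarrow> j \<in> V \<Longrightarrow> Var i ^ g * Var j ^ g \<in> K"
  shows "set js \<subseteq> V \<Longrightarrow> length js * (g - 1) + 1 < r \<Longrightarrow> hsym r js \<in> K"
proof (induction js arbitrary: r)
  case Nil
  then show ?case
    using ideal.subspace_0[OF K] by simp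
next
  case (Cons j js)
  have j: "j \<in> V" and js: "set js \<subseteq> V"
    using Cons.prems by auto
  have len: "length (j # js) * (g - 1) = length js * (g - 1) + (g - 1)"
    by simp
  show ?case
    unfolding hsym.simps
  proof (rule ideal.subspace_sum[OF K])
    fix t assume t: "t \<in> {..r}"
    consider "Suc g \<le> t" | "t = g" | "t \<le> g - 1"
      by linarith
    then show "Var j ^ t * hsym (r - t) js \<in> K"
    proof cases
      case 1
      then show ?thesis
        using ideal_power_mono[OF K pow[OF j]] ideal_mult_right[OF K] by blast
    next
      case 2
      \<comment> \<open>the colon ideal of \<open>Var j ^ g\<close> contains \<open>Var i ^ g\<close> for all \<open>i \<in> V\<close>\<close>
      have "length js * (g - 1) < r - g"
        using Cons.prems(2) len g by linarith
      then have "hsym (r - g) js \<in> {p. Var j ^ g * p \<in> K}"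
        using js sq[OF j] by (intro hsym_mem_of_powers[OF ideal_colon[OF K]]) auto
      then show ?thesis
        using 2 by simp
    next
      case 3
      then have "length js * (g - 1) + 1 < r - t"
        using Cons.prems(2) len g by linarith
      then show ?thesis
        using Cons.IH js by (auto intro: ideal.subspace_scale[OF K])
    qed
  qed
qed

section \<open>Pairs and triples of variables\<close>

lemma Var_pow_mult_mem_of_powers:
  fixes K :: "'a::comm_ring_1 mpoly set"
  assumes K: "ideal.subspace K" and i: "Var i ^ Suc g \<in> K" and j: "Var j ^ Suc g \<in> K"
    and ab: "g < a \<or> g < b"
  shows "Var i ^ a * Var j ^ b \<in> K"
  using ab
proof
  assume "g < a"
  then show ?thesis
    using ideal_power_mono[OF K i, of a] ideal_mult_right[OF K] by simp
next
  assume "g < b"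
  then show ?thesis
    using ideal_power_mono[OF K j, of b] ideal.subspace_scale[OF K] by simp
qed

lemma pair_power_mem_of_hsym:
  fixes K :: "'a::comm_ring_1 mpoly set"
  assumes K: "ideal.subspace K" and i: "Var i ^ Suc g \<in> K" and j: "Var j ^ Suc g \<in> K"
    and h: "hsym (2 * g) [i, j] \<in> K"
  shows "(Var i * Var j) ^ g \<in> K"
proof -
  have "(\<Sum>t\<in>{g}. Var i ^ t * Var j ^ (2 * g - t)) \<in> K"
    using h unfolding hsym_pair
    by (subst (asm) ideal_sum_mem_iff_subset[OF K, of _ "{g}"])
      (auto intro!: Var_pow_mult_mem_of_powers[OF K i j])
  then show ?thesis
    by (simp add: power_mult_distrib mult_2)
qed

lemma pair_generator_mem_of_hsym:
  fixes K :: "'a::comm_ring_1 mpoly set"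
  assumes K: "ideal.subspace K" and g: "1 \<le> g"
    and i: "Var i ^ Suc g \<in> K" and j: "Var j ^ Suc g \<in> K"
    and h: "hsym (2 * g - 1) [i, j] \<in> K"
  shows "(Var i + Var j) * (Var i * Var j) ^ (g - 1) \<in> K"
proof -
  have "(\<Sum>t\<in>{g - 1, g}. Var i ^ t * Var j ^ (2 * g - 1 - t)) \<in> K"
    using h g unfolding hsym_pair
    by (subst (asm) ideal_sum_mem_iff_subset[OF K, of _ "{g - 1, g}"])
      (auto intro!: Var_pow_mult_mem_of_powers[OF K i j])
  moreover obtain h where "g = Suc h"
    using g by (cases g) auto
  ultimately show ?thesis
    by (simp add: power_mult_distrib algebra_simps)
qed

context
  fixes K :: "'a::comm_ring_1 mpoly set" and V :: "nat set" and g :: nat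
  assumes K: "ideal.subspace K" and g3: "3 \<le> g"
    and pow: "\<And>j. j \<in> V \<Longrightarrow> Var j ^ Suc g \<in> K"
    and pair: "\<And>i j. i \<in> V \<Longrightarrow> j \<in> V \<Longrightarrow> i \<noteq> j \<Longrightarrow> (Var i + Var j) * (Var i * Var j) ^ (g - 1) \<in> K"
begin

lemma Var_pow_mult_Var_pow_mem:
  assumes i: "i \<in> V" and j: "j \<in> V"
  shows "Var i ^ g * Var j ^ g \<in> K"
proof (cases "i = j")
  case True
  then show ?thesis
    using ideal_power_mono[OF K pow[OF i], of "g + g"] g3 by (simp add: power_add)
next
  case False
  obtain h where h: "g = Suc h"
    using g3 by (cases g) auto
  have "Var j * ((Var i + Var j) * (Var i * Var j) ^ (g - 1)) \<in> K"
    by (rule ideal.subspace_scale[OF K pair[OF i j False]])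
  moreover have "Var i ^ h * Var j ^ Suc g \<in> K"
    by (rule ideal.subspace_scale[OF K pow[OF j]])
  ultimately have "Var j * ((Var i + Var j) * (Var i * Var j) ^ (g - 1)) - Var i ^ h * Var j ^ Suc g \<in> K"
    by (rule ideal.subspace_diff[OF K])
  moreover have "Var j * ((Var i + Var j) * (Var i * Var j) ^ (g - 1)) - Var i ^ h * Var j ^ Suc g
      = (Var i ^ g * Var j ^ g :: 'a mpoly)"
    unfolding h by (simp add: power_mult_distrib algebra_simps)
  ultimately show ?thesis
    by simp
qed

lemma Var_pow_mult_mem:
  assumes "i \<in> V" "j \<in> V" "g < a \<or> g < b \<or> g \<le> a \<and> g \<le> b"
  shows "Var i ^ a * Var j ^ b \<in> K"
proof (cases "g < a \<or> g < b")
  case True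
  then show ?thesis
    using Var_pow_mult_mem_of_powers[OF K pow pow] assms by blast
next
  case False
  then have "a = g" "b = g"
    using assms(3) by auto
  then show ?thesis
    using Var_pow_mult_Var_pow_mem[OF assms(1,2)] by simp
qed

lemma hsym_pair_mem:
  assumes j: "j \<in> V" and k: "k \<in> V" and jk: "j \<noteq> k" and s: "2 * g - 1 \<le> s"
  shows "hsym s [j, k] \<in> K"
proof (cases "s = 2 * g - 1")
  case True
  have "(\<Sum>t\<in>{g - 1, g}. Var j ^ t * Var k ^ (s - t)) = ((Var j + Var k) * (Var j * Var k) ^ (g - 1) :: 'a mpoly)"
    using True g3 by (cases g) (simp_all add: power_mult_distrib algebra_simps)
  then have "(\<Sum>t\<in>{g - 1, g}. Var j ^ t * Var k ^ (s - t)) \<in> K"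
    using pair[OF j k jk] by simp
  then show ?thesis
    unfolding hsym_pair using True g3
    by (subst ideal_sum_mem_iff_subset[OF K, of _ "{g - 1, g}"])
      (auto intro!: Var_pow_mult_mem_of_powers[OF K pow[OF j] pow[OF k]])
next
  case False
  then show ?thesis
    unfolding hsym_pair using s
    by (intro ideal.subspace_sum[OF K] Var_pow_mult_mem[OF j k]) auto
qed

lemma hsym_triple_leading_terms_mem:
  assumes i: "i \<in> V" and j: "j \<in> V" and k: "k \<in> V" and jk: "j \<noteq> k"
    and h: "hsym (3 * g - 3) [i, j, k] \<in> K"
  shows "Var i ^ (g - 1) * hsym (2 * g - 2) [j, k] + Var i ^ g * hsym (2 * g - 3) [j, k] \<in> K"
proof -
  \<comment> \<open>higher powers of \<open>Var i\<close> lie in \<open>K\<close>; lower ones leave a pair \<open>hsym\<close> of degree \<open>\<ge> 2 * g - 1\<close>\<close>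
  have "(\<Sum>t\<in>{g - 1, g}. Var i ^ t * hsym (3 * g - 3 - t) [j, k]) \<in> K"
    using h unfolding hsym.simps(2)[of _ i]
  proof (subst (asm) ideal_sum_mem_iff_subset[OF K, of _ "{g - 1, g}"])
    fix t assume t: "t \<in> {..3 * g - 3} - {g - 1, g}"
    show "Var i ^ t * hsym (3 * g - 3 - t) [j, k] \<in> K"
    proof (cases "Suc g \<le> t")
      case True
      then show ?thesis
        using ideal_power_mono[OF K pow[OF i], of t] ideal_mult_right[OF K] by simp
    next
      case False
      then have "2 * g - 1 \<le> 3 * g - 3 - t"
        using t by auto
      then show ?thesis
        using hsym_pair_mem[OF j k jk] ideal.subspace_scale[OF K] by blast
    qed
  qed (use g3 in auto)
  moreover have "3 * g - 3 - (g - 1) = 2 * g - 2" "3 * g - 3 - g = 2 * g - 3" "g - 1 \<noteq> g"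
    using g3 by auto
  ultimately show ?thesis
    by (simp del: hsym.simps)
qed

lemma triple_mem_of_hsym:
  assumes i: "i \<in> V" and j: "j \<in> V" and k: "k \<in> V" and ij: "i \<noteq> j" and ik: "i \<noteq> k"
    and jk: "j \<noteq> k" and h: "hsym (3 * g - 3) [i, j, k] \<in> K"
  shows "(Var i * Var j * Var k) ^ (g - 1) \<in> K"
proof -
  define m where "m = g - 2"
  have g: "g = m + 2"
    using g3 by (simp add: m_def)
  have XY: "Var i ^ (m + 1) * hsym (2 * m + 2) [j, k] + Var i ^ (m + 2) * hsym (2 * m + 1) [j, k] \<in> K"
    using hsym_triple_leading_terms_mem[OF i j k jk h] by (simp del: hsym.simps add: g)
  define X :: "'a mpoly" where "X = Var i ^ (m + 1) * (\<Sum>a\<in>{m, m + 1, m + 2}. Var j ^ a * Var k ^ (2 * m + 2 - a))"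
  define Y :: "'a mpoly" where "Y = (\<Sum>a\<in>{m, m + 1}. Var i ^ (m + 2) * (Var j ^ a * Var k ^ (2 * m + 1 - a)))"
  have "hsym (2 * m + 2) [j, k] - (\<Sum>a\<in>{m, m + 1, m + 2}. Var j ^ a * Var k ^ (2 * m + 2 - a)) \<in> K"
    unfolding hsym_pair using g
    by (intro ideal_sum_diff_mem[OF K] Var_pow_mult_mem_of_powers[OF K pow[OF j] pow[OF k]]) auto
  then have X: "Var i ^ (m + 1) * hsym (2 * m + 2) [j, k] - X \<in> K"
    unfolding X_def right_diff_distrib[symmetric] by (rule ideal.subspace_scale[OF K])
  have "(\<Sum>a\<le>2 * m + 1. Var i ^ (m + 2) * (Var j ^ a * Var k ^ (2 * m + 1 - a))) - Y \<in> K"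
    unfolding Y_def
  proof (rule ideal_sum_diff_mem[OF K])
    fix a assume a: "a \<in> {..2 * m + 1} - {m, m + 1}"
    show "Var i ^ (m + 2) * (Var j ^ a * Var k ^ (2 * m + 1 - a)) \<in> K"
    proof (cases "m + 2 \<le> a")
      case True
      then have "Var i ^ (m + 2) * Var j ^ a \<in> K"
        using g by (intro Var_pow_mult_mem[OF i j]) simp
      from ideal_mult_right[OF K this, of "Var k ^ (2 * m + 1 - a)"] show ?thesis
        by (simp only: mult.assoc)
    next
      case False
      then have "Var i ^ (m + 2) * Var k ^ (2 * m + 1 - a) \<in> K"
        using a g by (intro Var_pow_mult_mem[OF i k]) auto
      from ideal_mult_right[OF K this, of "Var j ^ a"] show ?thesis
        by (simp only: ac_simps)
    qed
  qed auto
  then have Y: "Var i ^ (m + 2) * hsym (2 * m + 1) [j, k] - Y \<in> K"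
    unfolding hsym_pair sum_distrib_left .
  have "X + Y = (Var i * Var j * Var k) ^ (m + 1)
      + ((Var i + Var j) * (Var i * Var j) ^ (m + 1)) * Var k ^ m
      + ((Var i + Var k) * (Var i * Var k) ^ (m + 1)) * Var j ^ m"
    unfolding X_def Y_def by (simp add: mult_2 power_mult_distrib algebra_simps)
  moreover have "X + Y \<in> K"
    using ideal.subspace_diff[OF K ideal.subspace_diff[OF K XY X] Y] by (simp add: algebra_simps)
  moreover have "((Var i + Var j) * (Var i * Var j) ^ (m + 1)) * Var k ^ m \<in> K"
    "((Var i + Var k) * (Var i * Var k) ^ (m + 1)) * Var j ^ m \<in> K"
    using pair[OF i j ij] pair[OF i k ik] g by (simp_all add: ideal_mult_right[OF K])
  ultimately have "(Var i * Var j * Var k) ^ (m + 1) \<in> K"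
    by (metis add_diff_cancel_right' ideal.subspace_diff[OF K])
  then show ?thesis
    using g by simp
qed

context
  assumes triple: "\<And>i j k. i \<in> V \<Longrightarrow> j \<in> V \<Longrightarrow> k \<in> V \<Longrightarrow> i \<noteq> j \<Longrightarrow> i \<noteq> k \<Longrightarrow> j \<noteq> k
      \<Longrightarrow> (Var i * Var j * Var k) ^ (g - 1) \<in> K"
begin

lemma pair_power_mult_hsym_mem:
  assumes x: "x \<in> V" and y: "y \<in> V" and xy: "x \<noteq> y"
    and js: "set js \<subseteq> V" "x \<notin> set js" "y \<notin> set js" and e: "length js * (g - 2) < e"
  shows "(Var x * Var y) ^ (g - 1) * hsym e js \<in> K"
proof -
  have "hsym e js \<in> {p. (Var x * Var y) ^ (g - 1) * p \<in> K}"
  proof (rule hsym_mem_of_powers[OF ideal_colon[OF K], of "V - {x, y}" "g - 1"])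
    fix z assume "z \<in> V - {x, y}"
    then show "Var z ^ (g - 1) \<in> {p. (Var x * Var y) ^ (g - 1) * p \<in> K}"
      using triple[OF x y _ xy] by (auto simp: power_mult_distrib)
  qed (use js e in \<open>auto simp: diff_diff_add numeral_2_eq_2\<close>)
  then show ?thesis
    by simp
qed

lemma Var_pow_mult_hsym_Suc_mem:
  assumes x: "x \<in> V"
  shows "distinct js \<Longrightarrow> set js \<subseteq> V \<Longrightarrow> x \<notin> set js \<Longrightarrow> length js * (g - 2) < d
    \<Longrightarrow> Var x ^ (g - 1) * (hsym (Suc d) js + Var x * hsym d js) \<in> K"
proof (induction js arbitrary: d)
  case Nil
  then show ?case
    using ideal.subspace_0[OF K] by simp
next
  case (Cons y js)
  have y: "y \<in> V" and xy: "x \<noteq> y" and yjs: "y \<notin> set js"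
    using Cons.prems by auto
  obtain h where h: "g = Suc h"
    using g3 by (cases g) auto
  have len: "length (y # js) * (g - 2) = length js * (g - 2) + (g - 2)"
    by simp
  show ?case
  proof (cases "js = []")
    case True
    then obtain e where e: "d = h + e"
      using Cons.prems(4) h le_Suc_ex by force
    have "Var x ^ (g - 1) * (hsym (Suc d) (y # js) + Var x * hsym d (y # js))
        = ((Var x + Var y) * (Var x * Var y) ^ h) * (Var y ^ e :: 'a mpoly)"
      unfolding True hsym_single h e by (simp add: power_mult_distrib power_add algebra_simps)
    then show ?thesis
      using ideal_mult_right[OF K pair[OF x y xy]] h by simp
  next
    case False
    then have "g - 2 \<le> length js * (g - 2)"
      by (cases js) auto
    then have "g \<le> d"
      using Cons.prems(4) len g3 by linarith
    then obtain e where e: "d = g + e"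
      using le_Suc_ex by blast
    define f :: "nat \<Rightarrow> 'a mpoly"
      where "f t = Var y ^ t * (Var x ^ (g - 1) * (hsym (Suc (d - t)) js + Var x * hsym (d - t) js))" for t
    have "Var x ^ (g - 1) * (hsym (Suc d) (y # js) + Var x * hsym d (y # js))
        = Var x ^ (g - 1) * Var y ^ Suc d + (\<Sum>t\<le>d. f t)"
      unfolding f_def by (rule hsym_Suc_add_Var_mult_hsym_Cons)
    also have "\<dots> \<in> K"
    proof (rule ideal.subspace_add[OF K])
      show "Var x ^ (g - 1) * Var y ^ Suc d \<in> K"
        using ideal_power_mono[OF K pow[OF y], of "Suc d"] \<open>g \<le> d\<close> ideal.subspace_scale[OF K] by simp
      have "f (g - 1) + f g
          = (Var x * Var y) ^ h * hsym (Suc (Suc e)) js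
            + ((Var x + Var y) * (Var x * Var y) ^ h) * hsym (Suc e) js
            + (Var x ^ g * Var y ^ g) * hsym e js"
        unfolding f_def e h by (simp add: power_mult_distrib algebra_simps)
      also have "\<dots> \<in> K"
      proof (intro ideal.subspace_add[OF K])
        have "length js * (g - 2) < Suc (Suc e)"
          using Cons.prems(4) len e g3 by linarith
        then show "(Var x * Var y) ^ h * hsym (Suc (Suc e)) js \<in> K"
          using pair_power_mult_hsym_mem[OF x y xy] Cons.prems yjs h by auto
        show "((Var x + Var y) * (Var x * Var y) ^ h) * hsym (Suc e) js \<in> K"
          using ideal_mult_right[OF K pair[OF x y xy]] h by simp
        show "(Var x ^ g * Var y ^ g) * hsym e js \<in> K"
          using ideal_mult_right[OF K Var_pow_mult_Var_pow_mem[OF x y]] by simp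
      qed
      finally have "f (g - 1) + f g \<in> K" .
      then show "(\<Sum>t\<le>d. f t) \<in> K"
      proof (subst ideal_sum_mem_iff_subset[OF K, of _ "{g - 1, g}"])
        fix t assume t: "t \<in> {..d} - {g - 1, g}"
        show "f t \<in> K"
        proof (cases "Suc g \<le> t")
          case True
          then show ?thesis
            unfolding f_def using ideal_power_mono[OF K pow[OF y]] ideal_mult_right[OF K] by auto
        next
          case False
          then have "length js * (g - 2) < d - t"
            using t Cons.prems(4) len by auto
          then show ?thesis
            unfolding f_def using Cons.IH Cons.prems by (auto intro: ideal.subspace_scale[OF K])
        qed
      qed (use \<open>g \<le> d\<close> g3 in auto)
    qed
    finally show ?thesis .
  qed
qed

lemma hsym_mem_of_powers_pairs_triples:
  "distinct js \<Longrightarrow> set js \<subseteq> V \<Longrightarrow> length js * (g - 2) + 2 < r \<Longrightarrow> hsym r js \<in> K"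
proof (induction js arbitrary: r)
  case Nil
  then show ?case
    using ideal.subspace_0[OF K] by simp
next
  case (Cons y js)
  have y: "y \<in> V" and yjs: "y \<notin> set js"
    using Cons.prems by auto
  have len: "length (y # js) * (g - 2) = length js * (g - 2) + (g - 2)"
    by simp
  have r: "Suc g \<le> r"
    using Cons.prems(3) len g3 by linarith
  have "Var y ^ (g - 1) * (hsym (Suc (r - g)) js + Var y * hsym (r - g) js) \<in> K"
    using Cons.prems(3) len g3 Cons.prems yjs by (intro Var_pow_mult_hsym_Suc_mem[OF y]) auto
  moreover have "Var y ^ (g - 1) * (hsym (Suc (r - g)) js + Var y * hsym (r - g) js)
      = (\<Sum>t\<in>{g - 1, g}. Var y ^ t * hsym (r - t) js :: 'a mpoly)"
  proof -
    obtain h where h: "g = Suc h"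
      using g3 by (cases g) auto
    then have "r - h = Suc (r - Suc h)"
      using r by simp
    then show ?thesis
      unfolding h by (simp add: algebra_simps)
  qed
  ultimately show ?case
    unfolding hsym.simps
  proof (subst ideal_sum_mem_iff_subset[OF K, of _ "{g - 1, g}"])
    fix t assume t: "t \<in> {..r} - {g - 1, g}"
    show "Var y ^ t * hsym (r - t) js \<in> K"
    proof (cases "Suc g \<le> t")
      case True
      then show ?thesis
        using ideal_power_mono[OF K pow[OF y]] ideal_mult_right[OF K] by auto
    next
      case False
      then have "length js * (g - 2) + 2 < r - t"
        using t Cons.prems(3) len by auto
      then show ?thesis
        using Cons.IH Cons.prems by (auto intro: ideal.subspace_scale[OF K])
    qed
  qed (use r in auto)
qed

end

end

section \<open>The three families of partitions\<close>

lemma Var_triple_power_mem: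
  fixes K :: "'a::comm_ring_1 mpoly set"
  assumes sorted: "\<And>x y z. x \<in> V \<Longrightarrow> y \<in> V \<Longrightarrow> z \<in> V \<Longrightarrow> x < y \<Longrightarrow> y < z
      \<Longrightarrow> (Var x * Var y * Var z) ^ e \<in> K"
    and ijk: "i \<in> V" "j \<in> V" "k \<in> V" "i \<noteq> j" "i \<noteq> k" "j \<noteq> k"
  shows "(Var i * Var j * Var k) ^ e \<in> K"
proof -
  consider "i < j" "j < k" | "i < k" "k < j" | "j < i" "i < k" | "j < k" "k < i" | "k < i" "i < j"
    | "k < j" "j < i"
    using ijk(4-6) by linarith
  then show ?thesis
  proof cases
    case 1
    then show ?thesis
      using sorted ijk by blast
  next
    case 2
    then have "(Var i * Var k * Var j) ^ e \<in> K"
      using sorted ijk by blast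
    then show ?thesis
      by (simp only: ac_simps)
  next
    case 3
    then have "(Var j * Var i * Var k) ^ e \<in> K"
      using sorted ijk by blast
    then show ?thesis
      by (simp only: ac_simps)
  next
    case 4
    then have "(Var j * Var k * Var i) ^ e \<in> K"
      using sorted ijk by blast
    then show ?thesis
      by (simp only: ac_simps)
  next
    case 5
    then have "(Var k * Var i * Var j) ^ e \<in> K"
      using sorted ijk by blast
    then show ?thesis
      by (simp only: ac_simps)
  next
    case 6
    then have "(Var k * Var j * Var i) ^ e \<in> K"
      using sorted ijk by blast
    then show ?thesis
      by (simp only: ac_simps)
  qed
qed

theorem DP_ideal_near_rectangular:
  assumes n: "1 \<le> n" and part: "is_partition n (replicate a u @ replicate c (u - 1))"
    and g_eq: "g = a + c"
  shows "(DP_ideal n (replicate a u @ replicate c (u - 1)) :: 'k::field_char_0 mpoly set) =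
    ideal_gen ({esym r {1..n} | r. 1 \<le> r \<and> r \<le> g - 1} \<union> {Var i ^ g | i. i \<in> {1..n}})"
    (is "_ = ideal_gen ?G")
proof -
  have part': "is_partition n (replicate a u @ replicate c (u - 1) @ replicate 0 1)"
    using part by simp
  have g: "1 \<le> g"
    using part n by (cases "a + c") (auto simp: g_eq is_partition_def)
  have pow: "Var j ^ g \<in> ?G" if "j \<in> {1..n}" for j
    using that by blast
  show ?thesis
  proof (rule DP_ideal_eq_ideal_genI[OF part _ _ _, of _ "g - 1"])
    have "Var i ^ g \<in> (DP_ideal n (replicate a u @ replicate c (u - 1)) :: 'k mpoly set)"
      if "i \<in> {1..n}" for i
      using that by (intro Var_power_mem_DP_ideal[OF part]) (simp_all add: g_eq)
    then show "?G \<subseteq> DP_ideal n (replicate a u @ replicate c (u - 1))"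
      using esym_all_mem_DP_ideal[OF part] by blast
    show "Var j ^ Suc (g - 1) \<in> ?G" if "j \<in> {1..n}" for j
      using pow[OF that] g by simp
  next
    fix r js assume "distinct js" and js: "set js \<subseteq> {1..n}" and rk: "r + length js \<le> n"
      and cond: "(\<Sum>i\<in>{1..length js}. conj_part (replicate a u @ replicate c (u - 1)) i) < r + length js"
    have "length js * g < r + length js"
      using sum_conj_part_shape_lessD(2)[OF part' rk] cond unfolding g_eq by simp
    then have "length js * (g - 1) < r"
      using g by (cases g) auto
    then show "hsym r js \<in> ideal_gen ?G"
      using hsym_mem_of_powers[OF ideal_gen_subspace pow[THEN ideal_gen_base] js] by blast
  qed blast
qed

theorem DP_ideal_near_rectangular_add_one:
  assumes part: "is_partition n (replicate a u @ replicate c (u - 1) @ [1])" and u: "3 \<le> u"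
    and g_eq: "g = a + c" and g: "1 < g"
  shows "(DP_ideal n (replicate a u @ replicate c (u - 1) @ [1]) :: 'k::field_char_0 mpoly set) =
    ideal_gen ({esym r {1..n} | r. 1 \<le> r \<and> r \<le> g} \<union> {Var i ^ (g + 1) | i. i \<in> {1..n}}
      \<union> {(Var i * Var j) ^ g | i j. 1 \<le> i \<and> i < j \<and> j \<le> n})"
    (is "_ = ideal_gen ?G")
proof -
  let ?lam = "replicate a u @ replicate c (u - 1) @ replicate 1 1"
  let ?I = "DP_ideal n ?lam :: 'k mpoly set"
  have lam: "replicate a u @ replicate c (u - 1) @ [1] = ?lam"
    by simp
  have part': "is_partition n ?lam"
    using part lam by simp
  have I: "ideal.subspace ?I"
    by (simp add: DP_ideal_def ideal_gen_subspace)
  have pow: "Var j ^ Suc g \<in> ?G" if "j \<in> {1..n}" for j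
    using that by auto
  have pair: "(Var i * Var j) ^ g \<in> ?G" if "i \<in> {1..n}" "j \<in> {1..n}" "i < j" for i j
    using that by auto
  have sq: "Var i ^ g * Var j ^ g \<in> ideal_gen ?G" if "i \<in> {1..n}" "j \<in> {1..n}" for i j
    using g that by (intro Var_pow_mult_Var_pow_mem_of_pairs[where V = "{1..n}", OF ideal_gen_subspace _
        pow[THEN ideal_gen_base] pair[THEN ideal_gen_base]]) simp_all
  have powI: "Var i ^ Suc g \<in> ?I" if "i \<in> {1..n}" for i
    using that by (intro Var_power_mem_DP_ideal[OF part']) (simp_all add: g_eq)
  have pairI: "(Var i * Var j) ^ g \<in> ?I" if "i \<in> {1..n}" "j \<in> {1..n}" "i < j" for i j
  proof -
    have "hsym (2 * g) [i, j] \<in> ?I"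
      using that u by (intro hsym_mem_DP_ideal_shape[OF part']) (auto simp: g_eq)
    then show ?thesis
      by (rule pair_power_mem_of_hsym[OF I powI[OF that(1)] powI[OF that(2)]])
  qed
  show ?thesis
    unfolding lam
  proof (rule DP_ideal_eq_ideal_genI[OF part' _ _ pow])
    show "?G \<subseteq> ?I"
      using esym_all_mem_DP_ideal[OF part'] powI pairI by fastforce
  next
    fix r js assume "distinct js" and js: "set js \<subseteq> {1..n}" and rk: "r + length js \<le> n"
      and cond: "(\<Sum>i\<in>{1..length js}. conj_part ?lam i) < r + length js"
    show "hsym r js \<in> ideal_gen ?G"
    proof (cases "js = []")
      case True
      then show ?thesis
        using cond ideal.subspace_0[OF ideal_gen_subspace] by simp
    next
      case False
      then have "length js * (g - 1) + 1 < r"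
        using sum_conj_part_shape_lessD(2)[OF part' rk] cond g unfolding g_eq by (cases "a + c") auto
      then show ?thesis
        using hsym_mem_of_powers_and_squares[OF ideal_gen_subspace _ pow[THEN ideal_gen_base] sq js] g
        by simp
    qed
  qed blast
qed

lemma pair_and_triple_mem_DP_ideal:
  assumes part: "is_partition n (replicate a u @ replicate c (u - 1) @ replicate 2 1)"
    and u: "4 \<le> u" and g_eq: "g = a + c + 1" and g: "3 \<le> g"
  defines "I \<equiv> DP_ideal n (replicate a u @ replicate c (u - 1) @ replicate 2 1) :: 'k::comm_ring_1 mpoly set"
  shows DP_ideal_pair_mem: "\<And>i j. i \<in> {1..n} \<Longrightarrow> j \<in> {1..n} \<Longrightarrow> i \<noteq> j
      \<Longrightarrow> (Var i + Var j) * (Var i * Var j) ^ (g - 1) \<in> I"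
    and DP_ideal_triple_mem: "\<And>i j k. i \<in> {1..n} \<Longrightarrow> j \<in> {1..n} \<Longrightarrow> k \<in> {1..n} \<Longrightarrow>
      i \<noteq> j \<Longrightarrow> i \<noteq> k \<Longrightarrow> j \<noteq> k \<Longrightarrow> (Var i * Var j * Var k) ^ (g - 1) \<in> I"
proof -
  have I: "ideal.subspace I"
    by (simp add: I_def DP_ideal_def ideal_gen_subspace)
  have pow: "Var i ^ Suc g \<in> I" if "i \<in> {1..n}" for i
    unfolding I_def using that by (intro Var_power_mem_DP_ideal[OF part]) (simp_all add: g_eq)
  show pair: "(Var i + Var j) * (Var i * Var j) ^ (g - 1) \<in> I"
    if "i \<in> {1..n}" "j \<in> {1..n}" "i \<noteq> j" for i j
  proof -
    have "hsym (2 * g - 1) [i, j] \<in> I"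
      unfolding I_def using that u g by (intro hsym_mem_DP_ideal_shape[OF part]) (auto simp: g_eq)
    then show ?thesis
      using pair_generator_mem_of_hsym[OF I _ pow[OF that(1)] pow[OF that(2)]] g by simp
  qed
  show "(Var i * Var j * Var k) ^ (g - 1) \<in> I"
    if "i \<in> {1..n}" "j \<in> {1..n}" "k \<in> {1..n}" "i \<noteq> j" "i \<noteq> k" "j \<noteq> k" for i j k
  proof -
    have "hsym (3 * g - 3) [i, j, k] \<in> I"
      unfolding I_def using that u g by (intro hsym_mem_DP_ideal_shape[OF part]) (auto simp: g_eq)
    then show ?thesis
      using that by (intro triple_mem_of_hsym[where V = "{1..n}", OF I g pow pair])
  qed
qed

theorem DP_ideal_near_rectangular_add_two_ones:
  assumes part: "is_partition n (replicate a u @ replicate c (u - 1) @ [1, 1])" and u: "4 \<le> u"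
    and g_eq: "g = a + c + 1" and g: "2 < g"
  shows "(DP_ideal n (replicate a u @ replicate c (u - 1) @ [1, 1]) :: 'k::field_char_0 mpoly set) =
    ideal_gen ({esym r {1..n} | r. 1 \<le> r \<and> r \<le> g} \<union> {Var i ^ (g + 1) | i. i \<in> {1..n}}
      \<union> {(Var i + Var j) * (Var i * Var j) ^ (g - 1) | i j. i \<in> {1..n} \<and> j \<in> {1..n} \<and> i \<noteq> j}
      \<union> {(Var i * Var j * Var k) ^ (g - 1) | i j k. 1 \<le> i \<and> i < j \<and> j < k \<and> k \<le> n})"
    (is "_ = ideal_gen ?G")
proof -
  let ?lam = "replicate a u @ replicate c (u - 1) @ replicate 2 1"
  have lam: "replicate a u @ replicate c (u - 1) @ [1, 1] = ?lam"
    by (simp add: numeral_2_eq_2)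
  have part': "is_partition n ?lam" and g3: "3 \<le> g"
    using part lam g by simp_all
  have pow: "Var j ^ Suc g \<in> ?G" if "j \<in> {1..n}" for j
    using that by auto
  have pair: "(Var i + Var j) * (Var i * Var j) ^ (g - 1) \<in> ?G"
    if "i \<in> {1..n}" "j \<in> {1..n}" "i \<noteq> j" for i j
    using that by blast
  have triple: "(Var i * Var j * Var k) ^ (g - 1) \<in> ideal_gen ?G"
    if "i \<in> {1..n}" "j \<in> {1..n}" "k \<in> {1..n}" "i \<noteq> j" "i \<noteq> k" "j \<noteq> k" for i j k
    using that by (rule Var_triple_power_mem[rotated]) (auto intro!: ideal_gen_base)
  show ?thesis
    unfolding lam
  proof (rule DP_ideal_eq_ideal_genI[OF part' _ _ pow])
    have "Var i ^ (g + 1) \<in> (DP_ideal n ?lam :: 'k mpoly set)" if "i \<in> {1..n}" for i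
      using that by (intro Var_power_mem_DP_ideal[OF part']) (simp_all add: g_eq)
    then show "?G \<subseteq> DP_ideal n ?lam"
      using esym_all_mem_DP_ideal[OF part'] DP_ideal_pair_mem[OF part' u g_eq g3]
        DP_ideal_triple_mem[OF part' u g_eq g3] by fastforce
  next
    fix r js assume js: "distinct js" "set js \<subseteq> {1..n}" and rk: "r + length js \<le> n"
      and cond: "(\<Sum>i\<in>{1..length js}. conj_part ?lam i) < r + length js"
    show "hsym r js \<in> ideal_gen ?G"
    proof (cases "js = []")
      case True
      then show ?thesis
        using cond ideal.subspace_0[OF ideal_gen_subspace] by simp
    next
      case False
      then have "length js * (g - 2) + 2 < r"
        using sum_conj_part_shape_lessD(2)[OF part' rk] cond g3 unfolding g_eq by (cases "a + c") auto
      then show ?thesis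
        using hsym_mem_of_powers_pairs_triples[OF ideal_gen_subspace g3 pow[THEN ideal_gen_base]
            pair[THEN ideal_gen_base] triple js]
        by blast
    qed
  qed blast
qed

theorem mainTheorem9:
  fixes n :: nat and lam :: "nat list"
  assumes "1 \<le> n" and "is_partition n lam"
  shows
   "(\<forall>u a c g. lam = replicate a u @ replicate c (u - 1) \<and> g = a + c \<longrightarrow>
       (DP_ideal n lam :: 'k::field_char_0 mpoly set) =
         ideal_gen ({esym r {1..n} | r. 1 \<le> r \<and> r \<le> g - 1} \<union> {Var i ^ g | i. i \<in> {1..n}}))
    \<and>
    (\<forall>u a c g. lam = replicate a u @ replicate c (u - 1) @ [1] \<and> 3 \<le> u \<and> g = a + c \<and> 1 < g \<longrightarrow>
       (DP_ideal n lam :: 'k::field_char_0 mpoly set) =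
         ideal_gen ({esym r {1..n} | r. 1 \<le> r \<and> r \<le> g} \<union> {Var i ^ (g + 1) | i. i \<in> {1..n}}
            \<union> {(Var i * Var j) ^ g | i j. 1 \<le> i \<and> i < j \<and> j \<le> n}))
    \<and>
    (\<forall>u a c g. lam = replicate a u @ replicate c (u - 1) @ [1, 1] \<and> 4 \<le> u \<and> g = a + c + 1 \<and> 2 < g \<longrightarrow>
       (DP_ideal n lam :: 'k::field_char_0 mpoly set) =
         ideal_gen ({esym r {1..n} | r. 1 \<le> r \<and> r \<le> g} \<union> {Var i ^ (g + 1) | i. i \<in> {1..n}}
            \<union> {(Var i + Var j) * (Var i * Var j) ^ (g - 1) | i j. i \<in> {1..n} \<and> j \<in> {1..n} \<and> i \<noteq> j}
            \<union> {(Var i * Var j * Var k) ^ (g - 1) | i j k. 1 \<le> i \<and> i < j \<and> j < k \<and> k \<le> n}))"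
  using assms
  by (intro conjI allI impI; elim conjE; hypsubst)
    (rule DP_ideal_near_rectangular DP_ideal_near_rectangular_add_one
      DP_ideal_near_rectangular_add_two_ones; simp)+

end
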